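(* Let $\zeta(r,n)=n^{-1/2}/(52r^2)$. There is no infinite family of megastars that is up-to-$\zeta$ fixating.
   Context: Moran process: given a directed graph $G$ and fitness $r>1$, one vertex (the initial mutant) is a mutant, the rest non-mutants. At each step a vertex $v$ is chosen with probability proportional to fitness (mutants $r$, non-mutants $1$), an out-neighbour $w$ of $v$ is chosen uniformly at random and the state of $v$ is copied to $w$. Extinction: eventually no mutants. An infinite family $\Upsilon$ of directed graphs is up-to-$\zeta$ fixating if for every $r>1$ there is $n_0$ such that for every $G\in\Upsilon$ with $n\ge n_0$ vertices, the extinction probability of the Moran process with fitness $r$ on $G$ from a uniformly random initial mutant is at most $\zeta(r,n)$. The $(k,\ell,m)$-megastar (for positive integers $k,\ell,m$): disjoint union of reservoirs $R_1,\dots,R_\ell$ (size $m$), cliques $K_1,\dots,K_\ell$ (size $k$), feeders $a_1,\dots,a_\ell$, and centre $v^*$; edges from $v^*$ to all reservoir vertices, from each vertex of $R_i$ to $a_i$, from $a_i$ to each vertex of $K_i$, both directions between distinct vertices of each $K_i$, and from every clique vertex to $v^*$. An infinite family of megastars is an infinite set of such graphs. *)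

theory Defs
  imports Complex_Main
begin

text \<open>A directed graph is a pair (V, E) with V a finite vertex set and E \<subseteq> V \<times> V.
  The state of the Moran process is the set S \<subseteq> V of mutants.\<close>

definition out_nbrs :: "('a \<times> 'a) set \<Rightarrow> 'a \<Rightarrow> 'a set" where
  "out_nbrs E v = {w. (v, w) \<in> E}"

definition fitness :: "real \<Rightarrow> 'a set \<Rightarrow> 'a \<Rightarrow> real" where
  "fitness r S v = (if v \<in> S then r else 1)"

definition total_fitness :: "'a set \<Rightarrow> real \<Rightarrow> 'a set \<Rightarrow> real" where
  "total_fitness V r S = (\<Sum>v\<in>V. fitness r S v)"

text \<open>A vertex v is chosen with probability proportional to fitness, an out-neighbour w of v is
  chosen uniformly, and the state of v is copied to w.  (A vertex without out-neighbours,
  which does not occur in megastars, leaves the state unchanged.)\<close>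
definition moran_step :: "'a set \<Rightarrow> ('a \<times> 'a) set \<Rightarrow> real \<Rightarrow> 'a set \<Rightarrow> 'a set \<Rightarrow> real" where
  "moran_step V E r S S' =
     (\<Sum>v\<in>V. fitness r S v / total_fitness V r S *
        (if out_nbrs E v = {} then (if S' = S then 1 else 0)
         else (\<Sum>w\<in>out_nbrs E v.
                 (if (if v \<in> S then insert w S else S - {w}) = S' then 1 else 0)
                 / real (card (out_nbrs E v)))))"

fun moran_prob :: "'a set \<Rightarrow> ('a \<times> 'a) set \<Rightarrow> real \<Rightarrow> nat \<Rightarrow> 'a set \<Rightarrow> 'a set \<Rightarrow> real" where
  "moran_prob V E r 0 S S' = (if S = S' then 1 else 0)"
| "moran_prob V E r (Suc t) S S' =
     (\<Sum>S''\<in>Pow V. moran_step V E r S S'' * moran_prob V E r t S'' S')"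

text \<open>Extinction probability from initial mutant set S: probability of eventually reaching
  the (absorbing) state with no mutants, i.e. the supremum (= limit, as the sequence is
  nondecreasing and bounded by 1) of the probability of having no mutants after t steps.\<close>
definition extinction_prob :: "'a set \<Rightarrow> ('a \<times> 'a) set \<Rightarrow> real \<Rightarrow> 'a set \<Rightarrow> real" where
  "extinction_prob V E r S = (SUP t. moran_prob V E r t S {})"

definition extinction_prob_uniform :: "'a set \<Rightarrow> ('a \<times> 'a) set \<Rightarrow> real \<Rightarrow> real" where
  "extinction_prob_uniform V E r = (\<Sum>v\<in>V. extinction_prob V E r {v}) / real (card V)"

definition up_to_fixating ::
    "(real \<Rightarrow> nat \<Rightarrow> real) \<Rightarrow> ('a set \<times> ('a \<times> 'a) set) set \<Rightarrow> bool" where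
  "up_to_fixating \<zeta> \<Upsilon> \<longleftrightarrow>
     (\<forall>r > 1. \<exists>n0. \<forall>(V, E) \<in> \<Upsilon>. card V \<ge> n0 \<longrightarrow>
        extinction_prob_uniform V E r \<le> \<zeta> r (card V))"

datatype mvertex = Centre | Res nat nat | Feeder nat | Clq nat nat

definition megastar :: "nat \<Rightarrow> nat \<Rightarrow> nat \<Rightarrow> mvertex set \<times> (mvertex \<times> mvertex) set" where
  "megastar k l m =
    (insert Centre ({Res i j | i j. i < l \<and> j < m} \<union> {Feeder i | i. i < l}
                    \<union> {Clq i j | i j. i < l \<and> j < k}),
     {(Centre, Res i j) | i j. i < l \<and> j < m}
     \<union> {(Res i j, Feeder i) | i j. i < l \<and> j < m}
     \<union> {(Feeder i, Clq i j) | i j. i < l \<and> j < k}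
     \<union> {(Clq i j, Clq i j') | i j j'. i < l \<and> j < k \<and> j' < k \<and> j \<noteq> j'}
     \<union> {(Clq i j, Centre) | i j. i < l \<and> j < k})"

definition megastars :: "(mvertex set \<times> (mvertex \<times> mvertex) set) set" where
  "megastars = {megastar k l m | k l m. 0 < k \<and> 0 < l \<and> 0 < m}"

definition zeta :: "real \<Rightarrow> nat \<Rightarrow> real" where
  "zeta r n = real n powr (-1/2) / (52 * r^2)"

end

theory Submission
  imports Defs
begin

text \<open>A mutant on a feeder or clique vertex is overwritten at least as fast as it reproduces
  (its temperature is at least 1), so it dies out with probability at least 1/(1+r).  A mutant
  on a reservoir vertex x of R_i must first copy itself to the feeder a_i, which happens at rate
  r, while x itself is overwritten by the centre at rate 1/(lm) and a mutant feeder is overwritten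
  by the other m - 1 vertices of R_i; comparing the two states {x} and {a_i, x} shows that it dies
  out with probability at least 1/(l(r^2+r)+2).  For r = 2, summing over the n = 1 + lm + l + lk vertices
  and applying AM-GM to lm/(8l) + l/3 gives n \<le> 24 S^2 for the sum S of these probabilities,
  so the average extinction probability S/n is at least 1/sqrt(24 n), well above \<zeta>(2, n), for
  every megastar.  An infinite family contains arbitrarily large megastars.\<close>

lemma sum_indicator_divide:
  "finite A \<Longrightarrow> (\<Sum>w\<in>A. (if P w then 1 else 0) / (c::real)) = real (card {w\<in>A. P w}) / c"
  by (simp add: sum_divide_distrib[symmetric] sum.inter_filter[symmetric])

definition reproduce :: "'a set \<Rightarrow> 'a \<Rightarrow> 'a \<Rightarrow> 'a set" where
  "reproduce S v w = (if v \<in> S then insert w S else S - {w})"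

locale moran_graph =
  fixes V :: "'a set" and E :: "('a \<times> 'a) set" and r :: real
  assumes finite_V: "finite V" and V_nonempty: "V \<noteq> {}" and E_subset: "E \<subseteq> V \<times> V"
    and out_nbrs_nonempty: "\<And>v. v \<in> V \<Longrightarrow> out_nbrs E v \<noteq> {}" and r_pos: "r > 0"
begin

abbreviation step :: "'a set \<Rightarrow> 'a set \<Rightarrow> real" where
  "step \<equiv> moran_step V E r"

abbreviation extinction :: "'a set \<Rightarrow> real" where
  "extinction \<equiv> extinction_prob V E r"

abbreviation W :: "'a set \<Rightarrow> real" where
  "W \<equiv> total_fitness V r"

lemma out_nbrs_subset: "out_nbrs E v \<subseteq> V"
  using E_subset by (auto simp: out_nbrs_def)

lemma finite_out_nbrs: "finite (out_nbrs E v)"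
  using out_nbrs_subset finite_V finite_subset by blast

lemma card_out_nbrs_pos: "v \<in> V \<Longrightarrow> card (out_nbrs E v) > 0"
  using finite_out_nbrs out_nbrs_nonempty card_gt_0_iff by blast

lemma fitness_pos: "fitness r S v > 0"
  using r_pos by (simp add: fitness_def)

lemma total_fitness_pos: "W S > 0"
  unfolding total_fitness_def using finite_V V_nonempty fitness_pos by (intro sum_pos) blast+

lemma sum_fitness_share: "(\<Sum>v\<in>V. fitness r S v / W S) = 1"
  using total_fitness_pos[of S] by (simp add: sum_divide_distrib[symmetric] total_fitness_def)

definition move_prob :: "'a set \<Rightarrow> 'a set \<Rightarrow> 'a \<Rightarrow> real" where
  "move_prob S S' v = fitness r S v / W S *
     (real (card {w \<in> out_nbrs E v. reproduce S v w = S'}) / real (card (out_nbrs E v)))"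

definition change_prob :: "'a set \<Rightarrow> 'a \<Rightarrow> real" where
  "change_prob S v = fitness r S v / W S *
     (real (card {w \<in> out_nbrs E v. (w \<in> S) \<noteq> (v \<in> S)}) / real (card (out_nbrs E v)))"

lemma move_prob_nonneg: "move_prob S S' v \<ge> 0"
  unfolding move_prob_def using fitness_pos[of S v] total_fitness_pos[of S] by simp

lemma moran_step_eq_sum_move_prob: "step S S' = (\<Sum>v\<in>V. move_prob S S' v)"
  unfolding moran_step_def move_prob_def
  by (rule sum.cong) (simp_all add: out_nbrs_nonempty sum_indicator_divide[OF finite_out_nbrs] reproduce_def)

lemma moran_step_nonneg: "step S S' \<ge> 0"
  by (simp add: moran_step_eq_sum_move_prob sum_nonneg move_prob_nonneg)

lemma moran_step_ge_sum_move_prob: "U \<subseteq> V \<Longrightarrow> step S S' \<ge> (\<Sum>v\<in>U. move_prob S S' v)"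
  unfolding moran_step_eq_sum_move_prob by (rule sum_mono2[OF finite_V]) (auto simp: move_prob_nonneg)

lemma sum_moran_step:
  assumes "S \<subseteq> V"
  shows "(\<Sum>S'\<in>Pow V. step S S') = 1"
proof -
  let ?p = "\<lambda>v. 1 / real (card (out_nbrs E v))"
  have "(\<Sum>S'\<in>Pow V. step S S') =
     (\<Sum>v\<in>V. fitness r S v / W S *
         (\<Sum>w\<in>out_nbrs E v. \<Sum>S'\<in>Pow V. (if reproduce S v w = S' then 1 else 0) * ?p v))"
    unfolding moran_step_def
    by (subst sum.swap) (simp add: out_nbrs_nonempty reproduce_def sum_distrib_left sum.swap[of _ "Pow V"])
  also have "\<dots> = (\<Sum>v\<in>V. fitness r S v / W S * (\<Sum>w\<in>out_nbrs E v. ?p v))"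
  proof (intro sum.cong refl arg_cong2[where f="(*)"])
    fix v w assume "w \<in> out_nbrs E v"
    then have "reproduce S v w \<in> Pow V"
      using assms out_nbrs_subset by (auto simp: reproduce_def)
    then show "(\<Sum>S'\<in>Pow V. (if reproduce S v w = S' then 1 else 0) * ?p v) = ?p v"
      using finite_V by (simp add: sum.delta[of "Pow V"] if_distrib[of "\<lambda>x. x / _"] cong: if_cong)
  qed
  also have "\<dots> = (\<Sum>v\<in>V. fitness r S v / W S)"
    using card_out_nbrs_pos by (intro sum.cong refl) fastforce
  finally show ?thesis using sum_fitness_share by simp
qed

lemma move_prob_self:
  assumes "v \<in> V"
  shows "move_prob S S v = fitness r S v / W S - change_prob S v"
proof -
  let ?N = "out_nbrs E v"
  let ?same = "{w \<in> ?N. (w \<in> S) = (v \<in> S)}" and ?diff = "{w \<in> ?N. (w \<in> S) \<noteq> (v \<in> S)}"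
  have "{w \<in> ?N. reproduce S v w = S} = ?same"
    by (auto simp: reproduce_def)
  moreover have "card ?same + card ?diff = card ?N"
    using finite_out_nbrs[of v] by (subst card_Un_disjoint[symmetric]) (auto intro: arg_cong[where f=card])
  then have "real (card ?same) / real (card ?N) = 1 - real (card ?diff) / real (card ?N)"
    using card_out_nbrs_pos[OF assms] by (simp add: field_simps flip: of_nat_add)
  ultimately show ?thesis
    unfolding move_prob_def change_prob_def by (simp add: right_diff_distrib)
qed

lemma one_minus_moran_step_self: "1 - step S S = (\<Sum>v\<in>V. change_prob S v)"
proof -
  have "step S S = (\<Sum>v\<in>V. fitness r S v / W S - change_prob S v)"
    unfolding moran_step_eq_sum_move_prob by (rule sum.cong) (auto simp: move_prob_self)
  then show ?thesis using sum_fitness_share[of S] by (simp add: sum_subtractf)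
qed

lemma moran_step_empty_empty: "step {} {} = 1"
  using one_minus_moran_step_self[of "{}"] by (simp add: change_prob_def)

abbreviation extinct_by :: "nat \<Rightarrow> 'a set \<Rightarrow> real" where
  "extinct_by t S \<equiv> moran_prob V E r t S {}"

lemma extinct_by_nonneg: "extinct_by t S \<ge> 0"
  by (induction t arbitrary: S) (auto intro!: sum_nonneg mult_nonneg_nonneg moran_step_nonneg)

lemma extinct_by_le_1: "S \<subseteq> V \<Longrightarrow> extinct_by t S \<le> 1"
proof (induction t arbitrary: S)
  case (Suc t)
  have "extinct_by (Suc t) S \<le> (\<Sum>S'\<in>Pow V. step S S' * 1)"
    unfolding moran_prob.simps
    by (intro sum_mono mult_left_mono) (auto intro: Suc.IH moran_step_nonneg)
  then show ?case using sum_moran_step[OF Suc.prems] by simp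
qed simp

lemma extinct_by_Suc_ge: "extinct_by t S \<le> extinct_by (Suc t) S"
proof (induction t arbitrary: S)
  case 0
  have "extinct_by (Suc 0) S = step S {}"
    using finite_V by (simp add: if_distrib cong: if_cong)
  then show ?case using moran_step_empty_empty moran_step_nonneg by simp
next
  case (Suc t)
  have "(\<Sum>S'\<in>Pow V. step S S' * extinct_by t S') \<le> (\<Sum>S'\<in>Pow V. step S S' * extinct_by (Suc t) S')"
    by (intro sum_mono mult_left_mono Suc.IH moran_step_nonneg)
  then show ?case
    by (simp only: moran_prob.simps(2)[of _ _ _ "Suc t"] moran_prob.simps(2)[of _ _ _ t])
qed

lemma extinct_by_tendsto: "S \<subseteq> V \<Longrightarrow> (\<lambda>t. extinct_by t S) \<longlonglongrightarrow> extinction S"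
  unfolding extinction_prob_def
  by (rule LIMSEQ_incseq_SUP) (auto intro: incseq_SucI extinct_by_Suc_ge bdd_aboveI2 extinct_by_le_1)

lemma extinction_nonneg: "S \<subseteq> V \<Longrightarrow> extinction S \<ge> 0"
  using extinct_by_tendsto by (rule LIMSEQ_le_const) (auto intro: extinct_by_nonneg)

lemma extinction_empty: "extinction {} = 1"
proof -
  have "extinct_by t {} \<ge> 1" for t
  proof (induction t)
    case (Suc t)
    then show ?case using extinct_by_Suc_ge[of t "{}"] by linarith
  qed simp
  then have "extinct_by t {} = 1" for t
    using extinct_by_le_1[of "{}" t] by (simp add: order_antisym)
  then show ?thesis using extinct_by_tendsto[of "{}"] by (simp add: LIMSEQ_const_iff)
qed

lemma extinction_ge_sum_step:
  assumes "S \<subseteq> V" "T \<subseteq> Pow V"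
  shows "extinction S \<ge> (\<Sum>S'\<in>T. step S S' * extinction S')"
proof (rule LIMSEQ_le)
  show "(\<lambda>t. \<Sum>S'\<in>T. step S S' * extinct_by t S') \<longlonglongrightarrow> (\<Sum>S'\<in>T. step S S' * extinction S')"
    using assms(2) by (intro tendsto_sum tendsto_mult_left extinct_by_tendsto) auto
  show "(\<lambda>t. extinct_by (Suc t) S) \<longlonglongrightarrow> extinction S"
    using extinct_by_tendsto[OF assms(1)] by (rule LIMSEQ_Suc)
  show "\<exists>N. \<forall>t\<ge>N. (\<Sum>S'\<in>T. step S S' * extinct_by t S') \<le> extinct_by (Suc t) S"
    unfolding moran_prob.simps(2) using assms(2) finite_V
    by (intro exI allI impI sum_mono2) (auto intro: mult_nonneg_nonneg moran_step_nonneg extinct_by_nonneg)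
qed

definition temperature :: "'a \<Rightarrow> real" where
  "temperature x = (\<Sum>v\<in>V-{x}. if x \<in> out_nbrs E v then 1 / real (card (out_nbrs E v)) else 0)"

lemma temperature_nonneg: "temperature x \<ge> 0"
  unfolding temperature_def by (rule sum_nonneg) auto

lemma temperature_ge_sum:
  assumes "U \<subseteq> V - {x}" "\<And>v. v \<in> U \<Longrightarrow> x \<in> out_nbrs E v"
  shows "temperature x \<ge> (\<Sum>v\<in>U. 1 / real (card (out_nbrs E v)))"
proof -
  have "(\<Sum>v\<in>U. 1 / real (card (out_nbrs E v)))
      = (\<Sum>v\<in>U. if x \<in> out_nbrs E v then 1 / real (card (out_nbrs E v)) else 0)"
    using assms(2) by simp
  also have "\<dots> \<le> temperature x"
    unfolding temperature_def using finite_V assms(1) by (intro sum_mono2) auto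
  finally show ?thesis .
qed

lemma change_prob_other_singleton:
  assumes "v \<in> V - {x}"
  shows "change_prob {x} v = (if x \<in> out_nbrs E v then 1 / real (card (out_nbrs E v)) else 0) / W {x}"
proof -
  have "{w \<in> out_nbrs E v. (w \<in> {x}) \<noteq> (v \<in> {x})} = (if x \<in> out_nbrs E v then {x} else {})"
    using assms by auto
  then show ?thesis unfolding change_prob_def using assms by (simp add: fitness_def)
qed

lemma one_minus_moran_step_singleton:
  assumes "x \<in> V" "x \<notin> out_nbrs E x"
  shows "1 - step {x} {x} = (r + temperature x) / W {x}"
proof -
  have "{w \<in> out_nbrs E x. (w \<in> {x}) \<noteq> (x \<in> {x})} = out_nbrs E x"
    using assms(2) by auto
  then have "change_prob {x} x = r / W {x}"
    unfolding change_prob_def using card_out_nbrs_pos[OF assms(1)] by (simp add: fitness_def)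
  then show ?thesis
    unfolding one_minus_moran_step_self temperature_def using assms(1) finite_V
    by (simp add: sum.remove[of V x] change_prob_other_singleton sum_divide_distrib add_divide_distrib)
qed

lemma moran_step_singleton_empty:
  assumes "x \<in> V"
  shows "step {x} {} \<ge> temperature x / W {x}"
proof -
  have "move_prob {x} {} v = (if x \<in> out_nbrs E v then 1 / real (card (out_nbrs E v)) else 0) / W {x}"
    if "v \<in> V - {x}" for v
  proof -
    have "{w \<in> out_nbrs E v. reproduce {x} v w = {}} = (if x \<in> out_nbrs E v then {x} else {})"
      using that by (auto simp: reproduce_def)
    then show ?thesis unfolding move_prob_def using that by (simp add: fitness_def)
  qed
  then have "(\<Sum>v\<in>V-{x}. move_prob {x} {} v) = temperature x / W {x}"
    unfolding temperature_def by (simp add: sum_divide_distrib)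
  then show ?thesis using moran_step_ge_sum_move_prob[of "V-{x}" "{x}" "{}"] by simp
qed

text \<open>From {x} the process moves to {} with probability at least temperature x / W {x} and
  leaves {x} with probability exactly (r + temperature x) / W {x}.\<close>
lemma extinction_singleton_ge:
  assumes "x \<in> V" "x \<notin> out_nbrs E x"
  shows "extinction {x} \<ge> temperature x / (temperature x + r)"
proof -
  have "extinction {x} \<ge> (\<Sum>S'\<in>{{}, {x}}. step {x} S' * extinction S')"
    using assms by (intro extinction_ge_sum_step) auto
  then have "extinction {x} \<ge> step {x} {} + step {x} {x} * extinction {x}"
    by (simp add: extinction_empty)
  moreover have "extinction {x} * ((r + temperature x) / W {x}) = extinction {x} * (1 - step {x} {x})"
    using one_minus_moran_step_singleton[OF assms] by simp
  ultimately have "extinction {x} * ((r + temperature x) / W {x}) \<ge> temperature x / W {x}"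
    using moran_step_singleton_empty[OF assms(1)] by (simp add: algebra_simps)
  then have "extinction {x} * (r + temperature x) \<ge> temperature x"
    using total_fitness_pos[of "{x}"] by (simp add: field_simps)
  then show ?thesis using r_pos temperature_nonneg[of x] by (simp add: field_simps)
qed

lemma extinction_singleton_ge_of_temperature:
  assumes "x \<in> V" "x \<notin> out_nbrs E x" "temperature x \<ge> 1"
  shows "extinction {x} \<ge> 1 / (1 + r)"
proof -
  have "1 / (1 + r) \<le> temperature x / (temperature x + r)"
    using assms(3) r_pos by (simp add: field_simps)
  then show ?thesis using extinction_singleton_ge[OF assms(1,2)] by linarith
qed

end


abbreviation megastar_V :: "nat \<Rightarrow> nat \<Rightarrow> nat \<Rightarrow> mvertex set" where
  "megastar_V k l m \<equiv> fst (megastar k l m)"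

abbreviation megastar_E :: "nat \<Rightarrow> nat \<Rightarrow> nat \<Rightarrow> (mvertex \<times> mvertex) set" where
  "megastar_E k l m \<equiv> snd (megastar k l m)"

lemma megastar_V_eq:
  "megastar_V k l m = insert Centre ({Res i j | i j. i < l \<and> j < m} \<union> {Feeder i | i. i < l}
                        \<union> {Clq i j | i j. i < l \<and> j < k})"
  by (simp add: megastar_def)

lemma out_nbrs_Centre: "out_nbrs (megastar_E k l m) Centre = {Res i j | i j. i < l \<and> j < m}"
  by (auto simp: out_nbrs_def megastar_def)

lemma out_nbrs_Res: "i < l \<Longrightarrow> j < m \<Longrightarrow> out_nbrs (megastar_E k l m) (Res i j) = {Feeder i}"
  by (auto simp: out_nbrs_def megastar_def)

lemma out_nbrs_Feeder: "i < l \<Longrightarrow> out_nbrs (megastar_E k l m) (Feeder i) = {Clq i j | j. j < k}"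
  by (auto simp: out_nbrs_def megastar_def)

lemma out_nbrs_Clq:
  "i < l \<Longrightarrow> j < k \<Longrightarrow>
     out_nbrs (megastar_E k l m) (Clq i j) = insert Centre {Clq i j' | j'. j' < k \<and> j' \<noteq> j}"
  by (auto simp: out_nbrs_def megastar_def)

lemma megastar_no_loop: "v \<notin> out_nbrs (megastar_E k l m) v"
  by (auto simp: out_nbrs_def megastar_def)

lemma card_Res: "card {Res i j | i j. i < l \<and> j < m} = l * m"
proof -
  have "{Res i j | i j. i < l \<and> j < m} = (\<lambda>(i, j). Res i j) ` ({..<l} \<times> {..<m})" by auto
  moreover have "inj_on (\<lambda>(i, j). Res i j) ({..<l} \<times> {..<m})" by (auto simp: inj_on_def)
  ultimately show ?thesis by (simp add: card_image card_cartesian_product)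
qed

lemma card_Clq: "card {Clq i j | i j. i < l \<and> j < k} = l * k"
proof -
  have "{Clq i j | i j. i < l \<and> j < k} = (\<lambda>(i, j). Clq i j) ` ({..<l} \<times> {..<k})" by auto
  moreover have "inj_on (\<lambda>(i, j). Clq i j) ({..<l} \<times> {..<k})" by (auto simp: inj_on_def)
  ultimately show ?thesis by (simp add: card_image card_cartesian_product)
qed

lemma card_Feeder: "card {Feeder i | i. i < l} = l"
proof -
  have "{Feeder i | i. i < l} = Feeder ` {..<l}" by auto
  then show ?thesis by (simp add: card_image inj_on_def)
qed

lemma card_Res_row: "card {Res i j | j. j < m} = m"
proof -
  have "{Res i j | j. j < m} = Res i ` {..<m}" by auto
  then show ?thesis by (simp add: card_image inj_on_def)
qed

lemma card_Res_row_remove: "j < m \<Longrightarrow> card {Res i j' | j'. j' < m \<and> j' \<noteq> j} = m - 1"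
proof -
  have "{Res i j' | j'. j' < m \<and> j' \<noteq> j} = Res i ` ({..<m} - {j})" by auto
  then show "j < m \<Longrightarrow> ?thesis" by (simp add: card_image inj_on_def)
qed

lemma card_Clq_row: "card {Clq i j | j. j < k} = k"
proof -
  have "{Clq i j | j. j < k} = Clq i ` {..<k}" by auto
  then show ?thesis by (simp add: card_image inj_on_def)
qed

lemma card_Clq_row_remove: "j < k \<Longrightarrow> card {Clq i j' | j'. j' < k \<and> j' \<noteq> j} = k - 1"
proof -
  have "{Clq i j' | j'. j' < k \<and> j' \<noteq> j} = Clq i ` ({..<k} - {j})" by auto
  then show "j < k \<Longrightarrow> ?thesis" by (simp add: card_image inj_on_def)
qed

lemma finite_megastar_V: "finite (megastar_V k l m)"
proof -
  have "{Res i j | i j. i < l \<and> j < m} = (\<lambda>(i, j). Res i j) ` ({..<l} \<times> {..<m})"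
    and "{Clq i j | i j. i < l \<and> j < k} = (\<lambda>(i, j). Clq i j) ` ({..<l} \<times> {..<k})"
    and "{Feeder i | i. i < l} = Feeder ` {..<l}"
    by auto
  then show ?thesis unfolding megastar_V_eq by simp
qed

lemma card_megastar_V: "card (megastar_V k l m) = 1 + l * m + l + l * k"
proof -
  let ?R = "{Res i j | i j. i < l \<and> j < m}" and ?F = "{Feeder i | i. i < l}"
    and ?C = "{Clq i j | i j. i < l \<and> j < k}"
  have fin: "finite ?R" "finite ?F" "finite ?C"
    using finite_megastar_V[of k l m] by (auto simp: megastar_V_eq)
  then have "card (?R \<union> ?F \<union> ?C) = card ?R + card ?F + card ?C"
    by (subst card_Un_disjoint, auto)+
  then show ?thesis
    unfolding megastar_V_eq using fin by (simp add: card_Res card_Feeder card_Clq)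
qed

lemma moran_graph_megastar:
  assumes "0 < k" "0 < l" "0 < m" "r > 0"
  shows "moran_graph (megastar_V k l m) (megastar_E k l m) r"
proof
  show "finite (megastar_V k l m)" by (rule finite_megastar_V)
  show "megastar_V k l m \<noteq> {}" by (simp add: megastar_def)
  show "megastar_E k l m \<subseteq> megastar_V k l m \<times> megastar_V k l m" by (auto simp: megastar_def)
  show "r > 0" by fact
  fix v assume "v \<in> megastar_V k l m"
  then show "out_nbrs (megastar_E k l m) v \<noteq> {}"
    unfolding megastar_V_eq using assms
    by (auto simp: out_nbrs_Centre out_nbrs_Res out_nbrs_Feeder out_nbrs_Clq)
qed


text \<open>Used with a, b the extinction probabilities from {Res i j} and {Feeder i, Res i j} and
  eps = 1/(l m); eliminating b leaves ((r + eps)^2 + eps M + r) a \<ge> eps (eps + r + M).\<close>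
lemma two_state_lower_bound:
  fixes a b eps r L M :: real
  assumes pos: "eps > 0" "r > 0" "L \<ge> 0" "M \<ge> 0" and LM: "L * M * eps = 1" and "a \<ge> 0"
    and ineq_a: "(r + eps) * a \<ge> eps + r * b" and ineq_b: "(eps + r + M) * b \<ge> (M - 1) * a"
  shows "a \<ge> 1 / (L * (r^2 + r) + 2)"
proof -
  define N where "N = eps * (eps + r + M)"
  define Q where "Q = L * (r^2 + r) + 2"
  have "N > 0" using pos by (simp add: N_def)
  have "Q > 0" using pos unfolding Q_def by (intro add_nonneg_pos mult_nonneg_nonneg) auto
  have "(r + eps) * (eps + r + M) * a \<ge> (eps + r * b) * (eps + r + M)"
    using ineq_a pos by (simp add: mult_right_mono mult.commute mult.left_commute)
  moreover have "r * ((eps + r + M) * b) \<ge> r * ((M - 1) * a)"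
    using ineq_b pos by (simp add: mult_left_mono)
  ultimately have "((r + eps)^2 + eps * M + r) * a \<ge> N"
    unfolding N_def by (simp add: algebra_simps power2_eq_square)
  moreover have "Q * N - ((r + eps)^2 + eps * M + r)
      = L * (r^2 + r) * (eps^2 + r * eps) + eps^2 + eps * M + (L * M * eps - 1) * (r^2 + r)"
    unfolding Q_def N_def by (simp add: algebra_simps power2_eq_square)
  then have "(r + eps)^2 + eps * M + r \<le> Q * N"
    using pos LM by (smt (verit) mult_nonneg_nonneg zero_le_power2)
  ultimately have "Q * N * a \<ge> N"
    using \<open>a \<ge> 0\<close> by (smt (verit) mult_right_mono)
  then have "Q * a \<ge> 1" using \<open>N > 0\<close> by (simp add: mult.commute mult.left_commute)
  then show ?thesis using \<open>Q > 0\<close> unfolding Q_def by (simp add: field_simps)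
qed

text \<open>AM-GM on b / (8a) + a / 3 handles large reservoirs; (a + c) / 3 handles the rest.\<close>
lemma size_le_24_square_of_lower_bound:
  fixes a b c S :: real
  assumes a: "a \<ge> 1" and b: "b \<ge> 0" and c: "c \<ge> 0" and S: "S \<ge> b / (6 * a + 2) + (a + c) / 3"
  shows "1 + a + b + c \<le> 24 * S^2"
proof -
  define x where "x = b / (8 * a)"
  define y where "y = (a + c) / 3"
  have "x \<ge> 0" "y \<ge> 1/3" using a b c by (simp_all add: x_def y_def)
  have "b / (6 * a + 2) \<ge> x"
    unfolding x_def using a b by (intro divide_left_mono) auto
  then have "S \<ge> x + y" using S y_def by linarith
  then have S2: "S^2 \<ge> (x + y)^2"
    using \<open>x \<ge> 0\<close> \<open>y \<ge> 1/3\<close> by (intro power_mono) auto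
  have "b / 6 = 4 * x * (a / 3)" unfolding x_def using a by (simp add: field_simps)
  also have "\<dots> \<le> 4 * x * y"
    using \<open>x \<ge> 0\<close> c unfolding y_def by (intro mult_left_mono) auto
  also have "\<dots> \<le> (x + y)^2" by (smt (verit) zero_le_power2 power2_diff power2_sum)
  finally have "b \<le> 6 * (x + y)^2" by simp
  moreover have "y^2 \<le> (x + y)^2"
    using \<open>x \<ge> 0\<close> \<open>y \<ge> 1/3\<close> by (intro power_mono) auto
  moreover have "y \<le> 3 * y^2"
    using \<open>y \<ge> 1/3\<close> mult_right_mono[of "1/3" y y] by (simp add: power2_eq_square)
  ultimately have "b + 2 * (a + c) \<le> 24 * (x + y)^2"
    unfolding y_def by linarith
  also have "\<dots> \<le> 24 * S^2" using S2 by simp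
  finally show ?thesis using a c by simp
qed

locale megastar_moran =
  fixes k l m :: nat and r :: real
  assumes k_pos: "0 < k" and l_pos: "0 < l" and m_pos: "0 < m" and r_pos': "r > 0"
begin

sublocale moran_graph "megastar_V k l m" "megastar_E k l m" r
  using moran_graph_megastar k_pos l_pos m_pos r_pos' by blast

lemma extinction_Feeder_ge:
  assumes "i < l"
  shows "extinction {Feeder i} \<ge> 1 / (1 + r)"
proof (rule extinction_singleton_ge_of_temperature)
  show "Feeder i \<in> megastar_V k l m" using assms by (simp add: megastar_def)
  have "temperature (Feeder i) \<ge> (\<Sum>v\<in>{Res i 0}. 1 / real (card (out_nbrs (megastar_E k l m) v)))"
    by (rule temperature_ge_sum) (use assms m_pos in \<open>auto simp: megastar_V_eq out_nbrs_Res\<close>)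
  then show "temperature (Feeder i) \<ge> 1" using assms m_pos by (simp add: out_nbrs_Res)
qed (rule megastar_no_loop)

lemma extinction_Clq_ge:
  assumes "i < l" "j < k"
  shows "extinction {Clq i j} \<ge> 1 / (1 + r)"
proof (rule extinction_singleton_ge_of_temperature)
  show "Clq i j \<in> megastar_V k l m" using assms by (simp add: megastar_def)
  let ?U = "insert (Feeder i) {Clq i j' | j'. j' < k \<and> j' \<noteq> j}"
  have "finite {Clq i j' | j'. j' < k \<and> j' \<noteq> j}"
    by (rule finite_subset[OF _ finite_V]) (use assms in \<open>auto simp: megastar_def\<close>)
  then have "card ?U = k" using assms k_pos by (simp add: card_Clq_row_remove)
  then have "1 = (\<Sum>v\<in>?U. 1 / real k)" using k_pos by simp
  also have "\<dots> = (\<Sum>v\<in>?U. 1 / real (card (out_nbrs (megastar_E k l m) v)))"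
  proof (rule sum.cong)
    fix v assume "v \<in> ?U"
    then consider "v = Feeder i" | j' where "v = Clq i j'" "j' < k" "j' \<noteq> j" by blast
    then show "1 / real k = 1 / real (card (out_nbrs (megastar_E k l m) v))"
    proof cases
      case 2
      moreover have "Centre \<notin> {Clq i j'' | j''. j'' < k \<and> j'' \<noteq> j'}" by auto
      ultimately show ?thesis
        using assms by (simp add: out_nbrs_Clq card_Clq_row_remove finite_subset[OF _ finite_V])
    qed (use assms in \<open>simp add: out_nbrs_Feeder card_Clq_row\<close>)
  qed simp
  also have "\<dots> \<le> temperature (Clq i j)"
    by (rule temperature_ge_sum) (use assms in \<open>auto simp: megastar_V_eq out_nbrs_Feeder out_nbrs_Clq\<close>)
  finally show "temperature (Clq i j) \<ge> 1" .
qed (rule megastar_no_loop)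

lemma temperature_Res:
  assumes "i < l" "j < m"
  shows "temperature (Res i j) = 1 / (real l * real m)"
proof -
  let ?t = "\<lambda>v. if Res i j \<in> out_nbrs (megastar_E k l m) v
                then 1 / real (card (out_nbrs (megastar_E k l m) v)) else 0"
  have "Res i j \<notin> out_nbrs (megastar_E k l m) v" if "v \<in> megastar_V k l m" "v \<noteq> Centre" for v
    using that unfolding megastar_V_eq by (auto simp: out_nbrs_Res out_nbrs_Feeder out_nbrs_Clq)
  then have "(\<Sum>v\<in>megastar_V k l m - {Res i j} - {Centre}. ?t v) = 0"
    by (intro sum.neutral) auto
  moreover have "Centre \<in> megastar_V k l m - {Res i j}"
    by (simp add: megastar_def)
  ultimately have "temperature (Res i j) = ?t Centre"
    unfolding temperature_def using finite_V sum.remove[of "megastar_V k l m - {Res i j}" Centre ?t]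
    by simp
  then show ?thesis using assms by (simp add: out_nbrs_Centre card_Res)
qed


lemma moran_step_Res_to_pair:
  assumes "i < l" "j < m"
  shows "step {Res i j} {Feeder i, Res i j} \<ge> r / W {Res i j}"
proof -
  have "{w \<in> out_nbrs (megastar_E k l m) (Res i j). reproduce {Res i j} (Res i j) w = {Feeder i, Res i j}}
      = {Feeder i}"
    using assms by (auto simp: out_nbrs_Res reproduce_def)
  then have "move_prob {Res i j} {Feeder i, Res i j} (Res i j) = r / W {Res i j}"
    using assms unfolding move_prob_def by (simp add: out_nbrs_Res fitness_def)
  moreover have "Res i j \<in> megastar_V k l m" using assms by (simp add: megastar_def)
  ultimately show ?thesis
    using moran_step_ge_sum_move_prob[of "{Res i j}" "{Res i j}" "{Feeder i, Res i j}"] by simp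
qed

lemma moran_step_pair_to_Res:
  assumes "i < l" "j < m"
  shows "step {Feeder i, Res i j} {Res i j} \<ge> (real m - 1) / W {Feeder i, Res i j}"
proof -
  let ?U = "{Res i j' | j'. j' < m \<and> j' \<noteq> j}"
  have "move_prob {Feeder i, Res i j} {Res i j} v = 1 / W {Feeder i, Res i j}" if "v \<in> ?U" for v
  proof -
    obtain j' where j': "v = Res i j'" "j' < m" "j' \<noteq> j" using \<open>v \<in> ?U\<close> by blast
    then have "{w \<in> out_nbrs (megastar_E k l m) v. reproduce {Feeder i, Res i j} v w = {Res i j}}
        = {Feeder i}"
      using assms by (auto simp: out_nbrs_Res reproduce_def)
    then show ?thesis using assms j' unfolding move_prob_def by (simp add: out_nbrs_Res fitness_def)
  qed
  then have "(\<Sum>v\<in>?U. move_prob {Feeder i, Res i j} {Res i j} v) = real (m - 1) / W {Feeder i, Res i j}"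
    using card_Res_row_remove[OF assms(2), of i] by simp
  moreover have "?U \<subseteq> megastar_V k l m" using assms by (auto simp: megastar_V_eq)
  ultimately show ?thesis
    using moran_step_ge_sum_move_prob[of ?U "{Feeder i, Res i j}" "{Res i j}"] m_pos
    by (simp add: of_nat_diff)
qed

text \<open>The pair state {Feeder i, Res i j} is left when Centre hits Res i j, when Feeder i
  reproduces, or when one of the other m - 1 reservoir vertices of R_i overwrites Feeder i.\<close>
lemma one_minus_moran_step_pair:
  assumes "i < l" "j < m"
  shows "1 - step {Feeder i, Res i j} {Feeder i, Res i j}
           \<le> (1 / (real l * real m) + r + real m) / W {Feeder i, Res i j}"
proof -
  let ?B = "{Feeder i, Res i j}" and ?R = "{Res i j' | j'. j' < m}"
  let ?D = "insert Centre (insert (Feeder i) ?R)"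
  have fin_R: "finite ?R"
    by (rule finite_subset[OF _ finite_V]) (use assms in \<open>auto simp: megastar_V_eq\<close>)
  have "change_prob ?B v = 0" if "v \<in> megastar_V k l m - ?D" for v
  proof -
    have no_change: "{w \<in> out_nbrs (megastar_E k l m) v. (w \<in> ?B) \<noteq> (v \<in> ?B)} = {}"
      using that unfolding megastar_V_eq by (auto simp: out_nbrs_Res out_nbrs_Feeder out_nbrs_Clq)
    show ?thesis unfolding change_prob_def no_change by simp
  qed
  then have "(\<Sum>v\<in>megastar_V k l m. change_prob ?B v) = (\<Sum>v\<in>?D. change_prob ?B v)"
    using assms by (intro sum.mono_neutral_right[OF finite_V]) (auto simp: megastar_V_eq)
  also have "\<dots> = change_prob ?B Centre + change_prob ?B (Feeder i) + (\<Sum>v\<in>?R. change_prob ?B v)"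
    using fin_R by simp
  also have "change_prob ?B Centre = 1 / (real l * real m) / W ?B"
  proof -
    have "{w \<in> out_nbrs (megastar_E k l m) Centre. (w \<in> ?B) \<noteq> (Centre \<in> ?B)} = {Res i j}"
      using assms by (auto simp: out_nbrs_Centre)
    then show ?thesis unfolding change_prob_def using assms
      by (simp add: out_nbrs_Centre card_Res fitness_def)
  qed
  also have "change_prob ?B (Feeder i) = r / W ?B"
  proof -
    have "{w \<in> out_nbrs (megastar_E k l m) (Feeder i). (w \<in> ?B) \<noteq> (Feeder i \<in> ?B)}
        = {Clq i j | j. j < k}"
      using assms by (auto simp: out_nbrs_Feeder)
    then show ?thesis unfolding change_prob_def using assms k_pos
      by (simp add: out_nbrs_Feeder card_Clq_row fitness_def)
  qed
  also have "(\<Sum>v\<in>?R. change_prob ?B v) \<le> real (card ?R) * (1 / W ?B)"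
  proof (rule sum_bounded_above)
    fix v assume "v \<in> ?R"
    then obtain j' where j': "v = Res i j'" "j' < m" by blast
    show "change_prob ?B v \<le> 1 / W ?B"
    proof (cases "j' = j")
      case True
      then have no_change: "{w \<in> out_nbrs (megastar_E k l m) v. (w \<in> ?B) \<noteq> (v \<in> ?B)} = {}"
        using assms j' by (auto simp: out_nbrs_Res)
      show ?thesis unfolding change_prob_def no_change using total_fitness_pos[of ?B] by simp
    next
      case False
      have "card {w \<in> out_nbrs (megastar_E k l m) v. (w \<in> ?B) \<noteq> (v \<in> ?B)} \<le> card {Feeder i}"
        using assms j' by (intro card_mono) (auto simp: out_nbrs_Res)
      then show ?thesis
        using assms j' False total_fitness_pos[of ?B] unfolding change_prob_def
        by (auto simp: out_nbrs_Res fitness_def divide_simps)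
    qed
  qed
  finally show ?thesis using one_minus_moran_step_self[of ?B] card_Res_row[of i m]
    by (simp add: add_divide_distrib)
qed


lemma extinction_Res_ineq:
  assumes "i < l" "j < m"
  shows "(r + 1 / (real l * real m)) * extinction {Res i j}
           \<ge> 1 / (real l * real m) + r * extinction {Feeder i, Res i j}"
proof -
  let ?A = "{Res i j}" and ?B = "{Feeder i, Res i j}" and ?eps = "1 / (real l * real m)"
  have V: "Res i j \<in> megastar_V k l m" "Feeder i \<in> megastar_V k l m"
    using assms by (simp_all add: megastar_def)
  have "extinction ?A \<ge> (\<Sum>S'\<in>{{}, ?A, ?B}. step ?A S' * extinction S')"
    using V by (intro extinction_ge_sum_step) auto
  then have "extinction ?A \<ge> step ?A {} + step ?A ?A * extinction ?A + step ?A ?B * extinction ?B"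
    by (simp add: extinction_empty doubleton_eq_iff)
  moreover have "step ?A ?A = 1 - (r + ?eps) / W ?A"
    using one_minus_moran_step_singleton[OF V(1) megastar_no_loop] temperature_Res[OF assms] by simp
  moreover have "step ?A {} \<ge> ?eps / W ?A"
    using moran_step_singleton_empty[OF V(1)] temperature_Res[OF assms] by simp
  moreover have "step ?A ?B * extinction ?B \<ge> r / W ?A * extinction ?B"
    using mult_right_mono[OF moran_step_Res_to_pair[OF assms] extinction_nonneg[of ?B]] V by simp
  ultimately have "(?eps + r * extinction ?B) / W ?A \<le> (r + ?eps) * extinction ?A / W ?A"
    by (simp add: algebra_simps add_divide_distrib)
  then show ?thesis using total_fitness_pos[of ?A] by (simp add: divide_le_cancel)
qed

lemma extinction_pair_ineq:
  assumes "i < l" "j < m"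
  shows "(1 / (real l * real m) + r + real m) * extinction {Feeder i, Res i j}
           \<ge> (real m - 1) * extinction {Res i j}"
proof -
  let ?A = "{Res i j}" and ?B = "{Feeder i, Res i j}" and ?c = "1 / (real l * real m) + r + real m"
  have V: "Res i j \<in> megastar_V k l m" "Feeder i \<in> megastar_V k l m"
    using assms by (simp_all add: megastar_def)
  have "extinction ?B \<ge> (\<Sum>S'\<in>{?A, ?B}. step ?B S' * extinction S')"
    using V by (intro extinction_ge_sum_step) auto
  then have "extinction ?B * (1 - step ?B ?B) \<ge> step ?B ?A * extinction ?A"
    by (simp add: doubleton_eq_iff algebra_simps)
  moreover have "step ?B ?A * extinction ?A \<ge> (real m - 1) / W ?B * extinction ?A"
    using mult_right_mono[OF moran_step_pair_to_Res[OF assms] extinction_nonneg[of ?A]] V by simp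
  moreover have "extinction ?B * (1 - step ?B ?B) \<le> extinction ?B * (?c / W ?B)"
    using mult_left_mono[OF one_minus_moran_step_pair[OF assms] extinction_nonneg[of ?B]] V by simp
  ultimately have "(real m - 1) * extinction ?A / W ?B \<le> ?c * extinction ?B / W ?B"
    by (simp add: mult.commute)
  then show ?thesis using total_fitness_pos[of ?B] by (simp add: divide_le_cancel)
qed

lemma extinction_Res_ge:
  assumes "i < l" "j < m"
  shows "extinction {Res i j} \<ge> 1 / (real l * (r^2 + r) + 2)"
  using two_state_lower_bound[OF _ r_pos _ _ _ _ extinction_Res_ineq[OF assms] extinction_pair_ineq[OF assms]]
    assms extinction_nonneg[of "{Res i j}"] by (simp add: megastar_def)


lemma sum_extinction_singleton_ge:
  "(\<Sum>v\<in>megastar_V k l m. extinction {v})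
     \<ge> real (l * m) / (real l * (r^2 + r) + 2) + real (l + l * k) / (1 + r)"
proof -
  let ?R = "{Res i j | i j. i < l \<and> j < m}" and ?F = "{Feeder i | i. i < l}"
    and ?C = "{Clq i j | i j. i < l \<and> j < k}"
  have fin: "finite ?R" "finite ?F" "finite ?C" using finite_V by (auto simp: megastar_V_eq)
  have "(\<Sum>v\<in>?R. extinction {v}) + (\<Sum>v\<in>?F. extinction {v}) + (\<Sum>v\<in>?C. extinction {v})
      = (\<Sum>v\<in>?R \<union> ?F \<union> ?C. extinction {v})"
    using fin by (subst sum.union_disjoint, auto)+
  also have "\<dots> \<le> (\<Sum>v\<in>megastar_V k l m. extinction {v})"
    by (intro sum_mono2[OF finite_V] extinction_nonneg) (auto simp: megastar_V_eq)
  finally have "(\<Sum>v\<in>megastar_V k l m. extinction {v})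
      \<ge> real (card ?R) * (1 / (real l * (r^2 + r) + 2)) + real (card ?F) * (1 / (1 + r))
        + real (card ?C) * (1 / (1 + r))"
    using sum_bounded_below[of ?R "1 / (real l * (r^2 + r) + 2)" "\<lambda>v. extinction {v}"]
      sum_bounded_below[of ?F "1 / (1 + r)" "\<lambda>v. extinction {v}"]
      sum_bounded_below[of ?C "1 / (1 + r)" "\<lambda>v. extinction {v}"]
    by (fastforce intro: extinction_Res_ge extinction_Feeder_ge extinction_Clq_ge)
  then show ?thesis by (simp add: card_Res card_Feeder card_Clq add_divide_distrib)
qed

end


lemma extinction_prob_uniform_megastar_gt_zeta:
  assumes "0 < k" "0 < l" "0 < m"
  shows "extinction_prob_uniform (megastar_V k l m) (megastar_E k l m) 2
           > zeta 2 (card (megastar_V k l m))"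
proof -
  interpret megastar_moran k l m 2 using assms by unfold_locales auto
  define n where "n = real (card (megastar_V k l m))"
  define S where "S = (\<Sum>v\<in>megastar_V k l m. extinction {v})"
  have S_ge: "S \<ge> real (l * m) / (6 * real l + 2) + (real l + real (l * k)) / 3"
    using sum_extinction_singleton_ge unfolding S_def by (simp add: algebra_simps)
  moreover have "real (l * m) / (6 * real l + 2) + (real l + real (l * k)) / 3 > 0"
    using assms by (intro add_nonneg_pos divide_pos_pos add_pos_nonneg) auto
  ultimately have "S > 0" by linarith
  have "n \<le> 24 * S^2"
    using size_le_24_square_of_lower_bound[OF _ _ _ S_ge] assms
    unfolding n_def card_megastar_V by simp
  also have "\<dots> < (208 * S)^2"
    using \<open>S > 0\<close> by (simp add: power_mult_distrib)
  finally have "sqrt n < 208 * S"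
    using \<open>S > 0\<close> by (intro real_less_lsqrt) simp_all
  have "n > 0" unfolding n_def card_megastar_V by (simp only: of_nat_0_less_iff)
  have "(-1/2::real) = - (1/2)" by simp
  then have "n powr (-1/2) = 1 / sqrt n"
    using powr_half_sqrt[of n] \<open>n > 0\<close> by (simp only: powr_minus inverse_eq_divide)
  then have "zeta 2 (card (megastar_V k l m)) = 1 / (208 * sqrt n)"
    unfolding zeta_def n_def[symmetric] by simp
  also have "\<dots> = sqrt n / (208 * n)"
    using \<open>n > 0\<close> real_sqrt_mult_self[of n] by (simp add: field_simps)
  also have "\<dots> < 208 * S / (208 * n)"
    using \<open>n > 0\<close> \<open>sqrt n < 208 * S\<close> by (intro divide_strict_right_mono) auto
  also have "\<dots> = extinction_prob_uniform (megastar_V k l m) (megastar_E k l m) 2"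
    unfolding extinction_prob_uniform_def S_def n_def by simp
  finally show ?thesis .
qed

lemma finite_megastars_card_less: "finite {G \<in> megastars. card (fst G) < n}"
proof -
  have "{G \<in> megastars. card (fst G) < n}
      \<subseteq> (\<lambda>(k, l, m). megastar k l m) ` ({..<n} \<times> {..<n} \<times> {..<n})"
  proof
    fix G assume "G \<in> {G \<in> megastars. card (fst G) < n}"
    then obtain k l m where G: "G = megastar k l m" "0 < k" "0 < l" "0 < m" "card (fst G) < n"
      unfolding megastars_def by blast
    then have "1 + l * m + l + l * k < n" using card_megastar_V[of k l m] by simp
    moreover have "k \<le> l * k" "m \<le> l * m" using G by simp_all
    ultimately have "k < n" "l < n" "m < n" by linarith+
    then show "G \<in> (\<lambda>(k, l, m). megastar k l m) ` ({..<n} \<times> {..<n} \<times> {..<n})"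
      using G by (intro image_eqI[where x="(k, l, m)"]) auto
  qed
  then show ?thesis by (rule finite_subset) simp
qed

theorem theorem1p11:
  shows "\<not> (\<exists>\<Upsilon>. \<Upsilon> \<subseteq> megastars \<and> infinite \<Upsilon> \<and> up_to_fixating zeta \<Upsilon>)"
proof
  assume "\<exists>\<Upsilon>. \<Upsilon> \<subseteq> megastars \<and> infinite \<Upsilon> \<and> up_to_fixating zeta \<Upsilon>"
  then obtain \<Upsilon> where sub: "\<Upsilon> \<subseteq> megastars" and inf: "infinite \<Upsilon>" and fixating: "up_to_fixating zeta \<Upsilon>"
    by blast
  have "(2::real) > 1" by simp
  then obtain n0 where n0: "\<forall>(V, E) \<in> \<Upsilon>. card V \<ge> n0 \<longrightarrow> extinction_prob_uniform V E 2 \<le> zeta 2 (card V)"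
    using fixating unfolding up_to_fixating_def by blast
  have "\<not> \<Upsilon> \<subseteq> {G \<in> megastars. card (fst G) < n0}"
    using inf finite_megastars_card_less finite_subset by blast
  then obtain G where "G \<in> \<Upsilon>" "\<not> card (fst G) < n0"
    using sub by blast
  moreover obtain k l m where "G = megastar k l m" "0 < k" "0 < l" "0 < m"
    using \<open>G \<in> \<Upsilon>\<close> sub unfolding megastars_def by blast
  ultimately have "megastar k l m \<in> \<Upsilon>" "card (megastar_V k l m) \<ge> n0"
    by auto
  then have "extinction_prob_uniform (megastar_V k l m) (megastar_E k l m) 2
      \<le> zeta 2 (card (megastar_V k l m))"
    using n0 by (auto simp: case_prod_beta)
  then show False
    using extinction_prob_uniform_megastar_gt_zeta[OF \<open>0 < k\<close> \<open>0 < l\<close> \<open>0 < m\<close>] by simp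
qed

end
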